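(* Let $(a_m)_{m\ge1}$ be defined by $a_1=2$ and $a_{m+1}=a_m+1/a_m$. Then for every $m\ge1$ the lower bound $a_m\ge\sqrt{m+\sqrt{m(m+1)}}$ holds, and $$\frac{a_{m+1}}{a_m}\le\sqrt{\frac{m+1}{m}},$$ so the sequence $\big(a_m/\sqrt m\big)_{m\ge1}$ is non-increasing; moreover $\lim_{m\to\infty}a_m/\sqrt m=\sqrt2$.
   Context: $a_m$ is the right endpoint of the support $[-a_m,a_m]$ of the $m$-fold monotone convolution of the standard semicircle law $\frac1{2\pi}\sqrt{4-x^2}\mathbf 1_{[-2,2]}dx$. *)

theory Defs
  imports "HOL-Analysis.Analysis"
begin

fun a_seq :: "nat \<Rightarrow> real" where
  "a_seq 0 = 2"
| "a_seq (Suc n) = a_seq n + 1 / a_seq n"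

(* a m is a_m for m \<ge> 1 (a 0 is an unused dummy value equal to a_1) *)
definition a :: "nat \<Rightarrow> real" where
  "a m = a_seq (m - 1)"

end

theory Submission
  imports Defs "HOL-Real_Asymp.Real_Asymp"
begin

text \<open>Squaring the recursion gives \<open>a\<^sub>m\<^sub>+\<^sub>1\<^sup>2 = a\<^sub>m\<^sup>2 + 2 + 1/a\<^sub>m\<^sup>2\<close>. The lower bound
  \<open>L(m) = m + \<surd>(m(m+1))\<close> is the larger root of \<open>x\<^sup>2 - 2mx - m\<close>, which is exactly the condition
  \<open>(1 + 1/x)\<^sup>2 \<le> (m+1)/m\<close>; it propagates along the squared recursion because
  \<open>x + 1/x\<close> is increasing for \<open>x \<ge> 1\<close> and \<open>L(m) + 2 + 1/L(m) \<ge> L(m+1)\<close>.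
  So the ratio bound, and with it the monotonicity of \<open>a\<^sub>m/\<surd>m\<close>, follow from the lower bound.
  For the limit, \<open>2m \<le> a\<^sub>m\<^sup>2 \<le> 2m + 2 + 2\<surd>m\<close>, the upper bound coming from
  \<open>1/a\<^sub>m\<^sup>2 \<le> 1/(2m) \<le> 2(\<surd>(m+1) - \<surd>m)\<close>, which telescopes.\<close>

lemma plus_inverse_mono:
  fixes x y :: real
  assumes "1 \<le> x" "x \<le> y"
  shows "x + 1 / x \<le> y + 1 / y"
proof -
  have "y + 1 / y - (x + 1 / x) = (y - x) * (1 - 1 / (x * y))"
    using assms by (simp add: field_simps)
  moreover have "1 / (x * y) \<le> 1"
    using assms mult_mono[of 1 x 1 y] by simp
  ultimately show ?thesis
    using assms by (smt (verit) mult_nonneg_nonneg)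
qed

lemma lower_root_step:
  fixes m :: real
  assumes "0 < m"
  defines "s \<equiv> sqrt (m * (m + 1))"
  shows "m + 1 + sqrt ((m + 1) * (m + 2)) \<le> (m + s) + 2 + 1 / (m + s)"
proof -
  have "m \<le> s"
    unfolding s_def using assms by (intro real_le_rsqrt) (simp add: power2_eq_square)
  have s_sq: "s\<^sup>2 = m * (m + 1)"
    unfolding s_def using assms by simp
  have inverse_eq: "1 / (m + s) = (s - m) / m"
    using assms \<open>m \<le> s\<close> s_sq by (simp add: field_simps power2_eq_square)
  have "sqrt ((m + 1) * (m + 2)) \<le> s * (m + 1) / m"
  proof (rule real_le_lsqrt)
    show "0 \<le> s * (m + 1) / m"
      using assms \<open>m \<le> s\<close> by simp
    have "(s * (m + 1) / m)\<^sup>2 = (m + 1) ^ 3 / m"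
      using assms s_sq by (simp add: power_mult_distrib power_divide power2_eq_square
          power3_eq_cube field_simps)
    then show "(m + 1) * (m + 2) \<le> (s * (m + 1) / m)\<^sup>2"
      using assms by (simp add: le_divide_eq power3_eq_cube algebra_simps)
  qed
  then show ?thesis
    unfolding inverse_eq using assms by (simp add: field_simps)
qed

lemma one_plus_inverse_le_sqrt:
  fixes m b :: real
  assumes "0 < m" "m + sqrt (m * (m + 1)) \<le> b"
  shows "1 + 1 / b \<le> sqrt ((m + 1) / m)"
proof -
  define s where "s = sqrt (m * (m + 1))"
  have "0 \<le> s" "s\<^sup>2 = m * (m + 1)"
    unfolding s_def using assms(1) by simp_all
  have "0 < b"
    using assms \<open>0 \<le> s\<close> unfolding s_def by linarith
  have "s\<^sup>2 \<le> (b - m)\<^sup>2"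
    using assms(2) \<open>0 \<le> s\<close> unfolding s_def by (intro power_mono) auto
  then have "2 * m * b + m \<le> b\<^sup>2"
    using \<open>s\<^sup>2 = m * (m + 1)\<close> by (simp add: power2_eq_square algebra_simps)
  then have "(1 + 1 / b)\<^sup>2 \<le> (m + 1) / m"
    using assms(1) \<open>0 < b\<close> by (simp add: power2_eq_square field_simps)
  then show ?thesis
    using \<open>0 < b\<close> by (simp add: real_le_rsqrt)
qed

lemma inverse_le_sqrt_increment:
  fixes m :: real
  assumes "1 \<le> m"
  shows "1 / (2 * m) \<le> 2 * (sqrt (m + 1) - sqrt m)"
proof -
  have "0 < sqrt (m + 1) + sqrt m"
    using assms by (simp add: add_pos_nonneg)
  have "(sqrt (m + 1) - sqrt m) * (sqrt (m + 1) + sqrt m) = 1"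
    using assms by (simp add: algebra_simps)
  then have diff_eq: "sqrt (m + 1) - sqrt m = 1 / (sqrt (m + 1) + sqrt m)"
    using \<open>0 < sqrt (m + 1) + sqrt m\<close> by (simp add: field_simps)
  have "sqrt m \<le> m"
    using assms by (simp add: real_sqrt_le_iff real_le_lsqrt power2_eq_square)
  moreover have "sqrt (m + 1) \<le> 2 * m"
  proof (rule real_le_lsqrt)
    have "m \<le> m * m"
      using assms mult_right_mono[of 1 m m] by simp
    then have "m + 1 \<le> 4 * (m * m)"
      using assms by linarith
    then show "m + 1 \<le> (2 * m)\<^sup>2"
      by (simp add: power2_eq_square)
  qed (use assms in simp_all)
  ultimately have "sqrt (m + 1) + sqrt m \<le> 4 * m"
    using assms by linarith
  then show ?thesis
    unfolding diff_eq using assms \<open>0 < sqrt (m + 1) + sqrt m\<close> by (simp add: field_simps)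
qed

lemma a_Suc: "1 \<le> m \<Longrightarrow> a (Suc m) = a m + 1 / a m"
  by (cases m) (simp_all add: a_def)

lemma a_ge_two: "2 \<le> a m"
proof -
  have "2 \<le> a_seq n" for n
    by (induction n) (simp_all add: add_increasing2)
  then show ?thesis
    by (simp add: a_def)
qed

lemma a_squared_Suc: "1 \<le> m \<Longrightarrow> (a (Suc m))\<^sup>2 = (a m)\<^sup>2 + 2 + 1 / (a m)\<^sup>2"
  using a_ge_two[of m] by (simp add: a_Suc power2_eq_square field_simps)

lemma a_squared_lower:
  assumes "1 \<le> m"
  shows "real m + sqrt (real m * (real m + 1)) \<le> (a m)\<^sup>2"
  using assms
proof (induction m rule: nat_induct_at_least)
  case base
  have "sqrt 2 \<le> 2"
    by (simp add: real_le_lsqrt)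
  then show ?case
    by (simp add: a_def)
next
  case (Suc m)
  have "1 \<le> real m + sqrt (real m * (real m + 1))"
    using \<open>1 \<le> m\<close> by (simp add: add_increasing2)
  then have "real m + sqrt (real m * (real m + 1)) + 2 + 1 / (real m + sqrt (real m * (real m + 1)))
      \<le> (a m)\<^sup>2 + 2 + 1 / (a m)\<^sup>2"
    using plus_inverse_mono[OF _ Suc.IH] by simp
  moreover have "real m + 1 + sqrt ((real m + 1) * (real m + 2)) \<le>
      real m + sqrt (real m * (real m + 1)) + 2 + 1 / (real m + sqrt (real m * (real m + 1)))"
    using lower_root_step[of "real m"] \<open>1 \<le> m\<close> by simp
  ultimately show ?case
    using a_squared_Suc[OF \<open>1 \<le> m\<close>] by (simp add: add_ac)
qed

lemma a_squared_ge_twice: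
  assumes "1 \<le> m"
  shows "2 * real m \<le> (a m)\<^sup>2"
proof -
  have "real m \<le> sqrt (real m * (real m + 1))"
    by (intro real_le_rsqrt) (simp add: power2_eq_square algebra_simps)
  then show ?thesis
    using a_squared_lower[OF assms] by simp
qed

lemma a_squared_upper:
  assumes "1 \<le> m"
  shows "(a m)\<^sup>2 \<le> 2 * real m + 2 + 2 * sqrt (real m)"
  using assms
proof (induction m rule: nat_induct_at_least)
  case base
  then show ?case
    by (simp add: a_def)
next
  case (Suc m)
  have "1 / (a m)\<^sup>2 \<le> 1 / (2 * real m)"
    using a_squared_ge_twice[OF \<open>1 \<le> m\<close>] \<open>1 \<le> m\<close> by (simp add: frac_le)
  also have "\<dots> \<le> 2 * (sqrt (real m + 1) - sqrt (real m))"
    using inverse_le_sqrt_increment[of "real m"] \<open>1 \<le> m\<close> by simp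
  finally show ?case
    using Suc.IH a_squared_Suc[OF \<open>1 \<le> m\<close>] by (simp add: add_ac)
qed

lemma a_lower:
  assumes "1 \<le> m"
  shows "sqrt (real m + sqrt (real m * (real m + 1))) \<le> a m"
proof -
  have "sqrt ((a m)\<^sup>2) = a m"
    using a_ge_two[of m] by simp
  then show ?thesis
    using real_sqrt_le_mono[OF a_squared_lower[OF assms]] by simp
qed

lemma a_ratio_le: "1 \<le> m \<Longrightarrow> a (m + 1) / a m \<le> sqrt ((real m + 1) / real m)"
  using one_plus_inverse_le_sqrt[of "real m" "(a m)\<^sup>2"] a_squared_lower[of m] a_ge_two[of m]
  by (simp add: a_Suc power2_eq_square field_simps)

lemma a_div_sqrt_antimono:
  assumes "1 \<le> m"
  shows "a (m + 1) / sqrt (real (m + 1)) \<le> a m / sqrt (real m)"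
proof -
  have "0 < a m"
    using a_ge_two[of m] by simp
  have "a (m + 1) \<le> a m * sqrt ((real m + 1) / real m)"
    using a_ratio_le[OF assms] \<open>0 < a m\<close> by (simp add: divide_le_eq mult.commute)
  also have "\<dots> = a m * sqrt (real (m + 1)) / sqrt (real m)"
    by (simp add: real_sqrt_divide)
  finally show ?thesis
    using assms by (simp add: field_simps)
qed

lemma a_div_sqrt_tendsto: "(\<lambda>m. a m / sqrt (real m)) \<longlonglongrightarrow> sqrt 2"
proof -
  have upper_limit: "(\<lambda>m. (2 * real m + 2 + 2 * sqrt (real m)) / real m) \<longlonglongrightarrow> 2"
    by real_asymp
  have "(\<lambda>m. (a m)\<^sup>2 / real m) \<longlonglongrightarrow> 2"
  proof (rule tendsto_sandwich[OF _ _ tendsto_const upper_limit])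
    show "\<forall>\<^sub>F m in sequentially. 2 \<le> (a m)\<^sup>2 / real m"
      using eventually_ge_at_top[of 1]
      by eventually_elim (use a_squared_ge_twice in \<open>simp add: le_divide_eq mult.commute\<close>)
    show "\<forall>\<^sub>F m in sequentially. (a m)\<^sup>2 / real m \<le> (2 * real m + 2 + 2 * sqrt (real m)) / real m"
      using eventually_ge_at_top[of 1]
      by eventually_elim (use a_squared_upper in \<open>simp add: divide_right_mono\<close>)
  qed
  then have "(\<lambda>m. sqrt ((a m)\<^sup>2 / real m)) \<longlonglongrightarrow> sqrt 2"
    by (rule tendsto_real_sqrt)
  moreover have "sqrt ((a m)\<^sup>2 / real m) = a m / sqrt (real m)" for m
    using a_ge_two[of m] by (simp add: real_sqrt_divide)
  ultimately show ?thesis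
    by simp
qed

theorem mainTheorem11:
  shows "(\<forall>m\<ge>1. a m \<ge> sqrt (real m + sqrt (real m * (real m + 1))))
       \<and> (\<forall>m\<ge>1. a (m + 1) / a m \<le> sqrt ((real m + 1) / real m))
       \<and> (\<forall>m\<ge>1. a (m + 1) / sqrt (real (m + 1)) \<le> a m / sqrt (real m))
       \<and> ((\<lambda>m. a m / sqrt (real m)) \<longlonglongrightarrow> sqrt 2)"
  using a_lower a_ratio_le a_div_sqrt_antimono a_div_sqrt_tendsto by blast

end
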